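(* For every integer $m$ with $3\leq m\leq 6$ we have $d_m\geq \frac{1}{m+2}$, and for every integer $m\geq 7$ we have $d_m\geq\frac18$.
   Context: For a positive integer $m$, a subset $A$ of an abelian group is $m$-sum-free if there is no triple $(x,y,z)\in A^3$ with $x+y=mz$. For a prime $p$, $d_m(\mathbb{Z}/p\mathbb{Z})=\max\{|A|/p : A\subseteq \mathbb{Z}/p\mathbb{Z}\ \text{is } m\text{-sum-free}\}$. For $m\ge 3$ it is known (from prior work) that $d_m(\mathbb{Z}/p\mathbb{Z})$ converges as $p\to\infty$ through primes; $d_m$ denotes this limit. *)

theory Defs
  imports Complex_Main "HOL-Computational_Algebra.Primes"
begin

text \<open>Z/pZ is represented by the residues {0..<p}; addition and scalar
multiplication are taken mod p.\<close>

definition msum_free_mod :: "nat \<Rightarrow> nat \<Rightarrow> nat set \<Rightarrow> bool" where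
  "msum_free_mod m p A \<longleftrightarrow>
     A \<subseteq> {..<p} \<and>
     \<not> (\<exists>x\<in>A. \<exists>y\<in>A. \<exists>z\<in>A. (x + y) mod p = (m * z) mod p)"

definition dm_mod :: "nat \<Rightarrow> nat \<Rightarrow> real" where
  "dm_mod m p = Max {real (card A) / real p | A. msum_free_mod m p A}"

definition primes_at_top :: "nat filter" where
  "primes_at_top = inf sequentially (principal {p. prime p})"

end

theory Submission
  imports Defs
begin

text \<open>
  Let \<open>A\<close> be the set of residues \<open>x\<close> for which the integer \<open>m x\<close> lies in one of the \<open>k\<close>
  windows \<open>(a + j p, a + j p + W)\<close>, \<open>j < k\<close>. Then every \<open>m z\<close> with \<open>z \<in> A\<close> lies in
  \<open>(a, a + W)\<close> modulo \<open>p\<close>, while for balanced \<open>a\<close> and \<open>W\<close> every sum \<open>x + y\<close> of two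
  elements of \<open>A\<close> lies in \<open>(a + W - p, a)\<close>, which is disjoint from it modulo \<open>p\<close>; so \<open>A\<close> is
  \<open>m\<close>-sum-free. The best width is \<open>W \<approx> (m + 2 - 2k) p / (m + 2)\<close>, giving density
  \<open>k (m + 2 - 2k) / (m (m + 2))\<close>: this is \<open>1 / (m + 2)\<close> for \<open>k = 1\<close> and at least \<open>1/8\<close>
  for \<open>k = \<lfloor>(m + 2) / 4\<rfloor>\<close>.
\<close>

definition window_set :: "nat \<Rightarrow> nat \<Rightarrow> nat \<Rightarrow> nat \<Rightarrow> nat \<Rightarrow> nat set" where
  "window_set m p k a W = {x. \<exists>j<k. a + j * p < m * x \<and> m * x < a + j * p + W}"

lemma not_dvd_diff_outside_windows:
  fixes p a W s t j :: int
  assumes "0 < p" and "a + W < s + p" and "s < a"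
    and "a + j * p < t" and "t < a + j * p + W"
  shows "\<not> p dvd s - t"
proof
  assume "p dvd s - t"
  then obtain q where q: "s = t + q * p"
    by (metis add_diff_cancel_left' diff_add_cancel dvdE mult.commute)
  define i where "i = j + q"
  have s_window: "a + i * p < s" "s < a + i * p + W"
    using assms(4,5) q by (simp_all add: i_def algebra_simps)
  show False
  proof (cases "0 \<le> i")
    case True
    then have "0 \<le> i * p" using \<open>0 < p\<close> by simp
    then show False using s_window assms(3) by linarith
  next
    case False
    then have "i * p \<le> - 1 * p" using \<open>0 < p\<close> by (intro mult_right_mono) auto
    then show False using s_window assms(2) by linarith
  qed
qed

lemma window_set_sum_bounds:
  assumes x: "x \<in> window_set m p k a W" and y: "y \<in> window_set m p k a W"
    and lower: "2 * a + 2 * k * p + 2 * W \<le> m * a + 2 * p"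
    and upper: "m * a + m * W \<le> 2 * a + m * p"
  shows "x + y < a" and "a + W < x + y + p"
proof -
  obtain i j where i: "i < k" "a + i * p < m * x" "m * x < a + i * p + W"
    and j: "j < k" "a + j * p < m * y" "m * y < a + j * p + W"
    using x y unfolding window_set_def by blast
  have "(i + 1) * p \<le> k * p" "(j + 1) * p \<le> k * p"
    using i(1) j(1) by (intro mult_le_mono1; simp)+
  then have "m * (x + y) < m * a"
    using i(3) j(3) lower by (simp add: algebra_simps)
  then show "x + y < a" by simp
  have "m * (a + W) < m * (x + y + p)"
    using i(2) j(2) upper by (simp add: algebra_simps)
  then show "a + W < x + y + p" by simp
qed

lemma window_set_subset_lessThan:
  assumes fits: "a + k * p + W \<le> m * p + p"
  shows "window_set m p k a W \<subseteq> {..<p}"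
proof
  fix x assume "x \<in> window_set m p k a W"
  then obtain j where j: "j < k" "m * x < a + j * p + W"
    unfolding window_set_def by blast
  have "(j + 1) * p \<le> k * p" using j(1) by (intro mult_le_mono1) simp
  then have "p + j * p \<le> k * p" by (simp add: algebra_simps)
  then have "m * x < m * p" using j(2) fits by linarith
  then show "x \<in> {..<p}" by simp
qed

lemma msum_free_mod_window_set:
  assumes "0 < p"
    and lower: "2 * a + 2 * k * p + 2 * W \<le> m * a + 2 * p"
    and upper: "m * a + m * W \<le> 2 * a + m * p"
    and fits: "a + k * p + W \<le> m * p + p"
  shows "msum_free_mod m p (window_set m p k a W)"
  unfolding msum_free_mod_def
proof (intro conjI window_set_subset_lessThan[OF fits] notI)
  assume "\<exists>x\<in>window_set m p k a W. \<exists>y\<in>window_set m p k a W. \<exists>z\<in>window_set m p k a W.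
            (x + y) mod p = m * z mod p"
  then obtain x y z where xy: "x \<in> window_set m p k a W" "y \<in> window_set m p k a W"
    and z: "z \<in> window_set m p k a W" and congr: "(x + y) mod p = m * z mod p"
    by blast
  obtain j where j: "a + j * p < m * z" "m * z < a + j * p + W"
    using z unfolding window_set_def by blast
  have "int p dvd int (x + y) - int (m * z)"
    using congr by (metis mod_eq_dvd_iff zmod_int)
  moreover have "int a + int j * int p < int (m * z)" "int (m * z) < int a + int j * int p + int W"
    using j by (simp_all flip: of_nat_add of_nat_mult)
  then have "\<not> int p dvd int (x + y) - int (m * z)"
    using window_set_sum_bounds[OF xy lower upper] \<open>0 < p\<close>
    by (intro not_dvd_diff_outside_windows) (simp_all flip: of_nat_add)
  ultimately show False by contradiction
qed

lemma finite_window_set: "finite (window_set m p k a W)"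
proof (cases "m = 0")
  case True
  then show ?thesis by (simp add: window_set_def)
next
  case False
  have "window_set m p k a W \<subseteq> {..<a + k * p + W}"
  proof
    fix x assume "x \<in> window_set m p k a W"
    then obtain j where "j < k" "m * x < a + j * p + W"
      unfolding window_set_def by blast
    moreover have "x \<le> m * x" using False by simp
    moreover have "j * p \<le> k * p" using \<open>j < k\<close> by simp
    ultimately show "x \<in> {..<a + k * p + W}" unfolding lessThan_iff by linarith
  qed
  then show ?thesis by (rule finite_subset) simp
qed

lemma window_block_bounds:
  fixes L :: nat
  assumes "0 < m" and "x \<in> {L div m + 1 ..< L div m + W div m}"
  shows "L < m * x" and "m * x < L + W"
proof -
  have "L < m * (L div m) + m"
    using mult_div_mod_eq[of m L] mod_less_divisor[OF \<open>0 < m\<close>, of L] by linarith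
  moreover have "m * (L div m + 1) \<le> m * x" using assms(2) by (intro mult_le_mono2) simp
  ultimately show "L < m * x" by (simp add: algebra_simps)
  have "m * x + m \<le> m * (L div m) + m * (W div m)"
    using assms(2) mult_le_mono2[of "x + 1" "L div m + W div m" m] by (simp add: algebra_simps)
  also have "\<dots> \<le> L + W"
    using times_div_less_eq_dividend[of m L] times_div_less_eq_dividend[of m W] by linarith
  finally show "m * x < L + W" using \<open>0 < m\<close> by linarith
qed

lemma window_index_le:
  fixes i j p :: nat
  assumes "W \<le> p" and "a + i * p < y" and "y < a + j * p + W"
  shows "i \<le> j"
proof -
  have "i * p < (j + 1) * p" using assms by (simp add: algebra_simps)
  then have "i < j + 1" using mult_less_cancel2 by blast
  then show ?thesis by simp
qed

lemma card_window_set_ge: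
  assumes "0 < m" and "W \<le> p"
  shows "k * (W div m) \<le> card (window_set m p k a W) + k"
proof -
  define block where "block j = {(a + j * p) div m + 1 ..< (a + j * p) div m + W div m}" for j
  have block_window: "a + j * p < m * x \<and> m * x < a + j * p + W" if "x \<in> block j" for j x
    using window_block_bounds[OF \<open>0 < m\<close>] that unfolding block_def by blast
  have disjoint: "block i \<inter> block j = {}" if "i \<noteq> j" for i j
  proof -
    have "i = j" if "x \<in> block i" "x \<in> block j" for x
      using window_index_le[OF \<open>W \<le> p\<close>] block_window[OF that(1)] block_window[OF that(2)]
      by (meson le_antisym)
    with \<open>i \<noteq> j\<close> show ?thesis by blast
  qed
  have "k * (W div m - 1) = card (\<Union>j<k. block j)"
    using disjoint by (simp add: card_UN_disjoint block_def)
  also have "\<dots> \<le> card (window_set m p k a W)"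
    using block_window by (intro card_mono finite_window_set) (auto simp: window_set_def)
  finally show ?thesis by (simp add: diff_mult_distrib2)
qed

lemma window_parameters_fit:
  fixes m k p a W :: nat
  assumes "3 \<le> m" and "k + 2 \<le> m" and upper: "m * a + m * W \<le> 2 * a + m * p"
  shows "a + k * p + W \<le> m * p + p"
proof -
  have "m - 2 + 2 = m" using assms(1) by simp
  then have "m * a = (m - 2) * a + 2 * a" by (metis add_mult_distrib)
  then have "(m - 2) * a \<le> m * p"
    using upper by linarith
  also have "\<dots> \<le> (m - 2) * (3 * p)"
  proof -
    have "m \<le> (m - 2) * 3" using assms(1) by linarith
    then show ?thesis by (metis mult.assoc mult.commute mult_le_mono1)
  qed
  finally have "a \<le> 3 * p"
    using assms(1) by simp
  have "3 * p \<le> m * p"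
    using mult_le_mono1[OF assms(1)] .
  moreover have "m * (a + W) = m * a + m * W" and "m * (3 * p) = 3 * (m * p)"
    by (simp_all add: add_mult_distrib2)
  ultimately have "m * (a + W) \<le> m * (3 * p)"
    using upper \<open>a \<le> 3 * p\<close> by linarith
  then have "a + W \<le> 3 * p"
    using assms(1) by simp
  moreover have "k * p + 2 * p \<le> m * p"
    using mult_le_mono1[OF assms(2), of p] by (simp add: algebra_simps)
  ultimately show ?thesis by linarith
qed

lemma window_parameters_exist:
  fixes m k p :: nat
  assumes "3 \<le> m" and "2 * k \<le> m + 1" and "m \<le> p"
  obtains a W where
    "2 * a + 2 * k * p + 2 * W \<le> m * a + 2 * p"
    "m * a + m * W \<le> 2 * a + m * p"
    "W \<le> p"
    "(m + 2 - 2 * k) * p < (m + 2) * (W + 2)"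
proof -
  define D where "D = m + 2 - 2 * k"
  have D_split: "D * p + 2 * k * p = m * p + 2 * p"
    using assms(2) by (simp add: D_def flip: add_mult_distrib)
  have "m \<le> D * p"
    using assms(2,3) mult_le_mono[of 1 D m p] by (simp add: D_def)
  \<comment> \<open>\<open>a\<close> is the largest value the upper constraint allows; subtracting \<open>m\<close> in the
    choice of \<open>W\<close> leaves enough room for the lower one.\<close>
  define W where "W = (D * p - m) div (m + 2)"
  define r where "r = (D * p - m) mod (m + 2)"
  have W: "D * p = m + (m + 2) * W + r" and "r < m + 2"
    using mult_div_mod_eq[of "m + 2" "D * p - m"] \<open>m \<le> D * p\<close> unfolding W_def r_def by simp_all
  have "(m + 2) * W \<le> (m + 2) * p"
    using W D_split add_mult_distrib[of m 2 p] by linarith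
  then have "W \<le> p" by (simp only: mult_le_cancel1)
  define a where "a = m * (p - W) div (m - 2)"
  define s where "s = m * (p - W) mod (m - 2)"
  have a: "m * (p - W) = (m - 2) * a + s" and "s < m - 2"
    using mult_div_mod_eq[of "m - 2" "m * (p - W)"] assms(1) unfolding a_def s_def by simp_all
  have "m - 2 + 2 = m" using assms(1) by simp
  then have ma: "m * a = (m - 2) * a + 2 * a" by (metis add_mult_distrib)
  have mp: "m * p = m * (p - W) + m * W"
    using \<open>W \<le> p\<close> add_mult_distrib2[of m "p - W" W] by simp
  have upper: "m * a + m * W \<le> 2 * a + m * p"
    using ma mp a by linarith
  have "(m + 2) * W = m * W + 2 * W" by simp
  then have lower: "2 * a + 2 * k * p + 2 * W \<le> m * a + 2 * p"
    using ma mp a W D_split \<open>s < m - 2\<close> by linarith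
  have "D * p < (m + 2) * (W + 2)"
    using W \<open>r < m + 2\<close> by (simp add: algebra_simps)
  then show ?thesis
    unfolding D_def by (rule that[OF lower upper \<open>W \<le> p\<close>])
qed

definition window_density :: "nat \<Rightarrow> nat \<Rightarrow> real" where
  "window_density m k = real k * (real m + 2 - 2 * real k) / (real m * (real m + 2))"

lemma card_window_set_ge_density:
  assumes "2 \<le> m" and "W \<le> p" and "2 * k \<le> m + 2"
    and width: "(m + 2 - 2 * k) * p < (m + 2) * (W + 2)"
  shows "window_density m k * real p \<le> real (card (window_set m p k a W)) + 3 * real k"
proof -
  have "0 < m" using assms(1) by simp
  have "k * (W div m) \<le> card (window_set m p k a W) + k"
    using card_window_set_ge[OF \<open>0 < m\<close> \<open>W \<le> p\<close>] .
  then have card: "real k * real (W div m) \<le> real (card (window_set m p k a W)) + real k"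
    by (metis of_nat_add of_nat_le_iff of_nat_mult)
  have "W < m * (W div m) + m"
    using mult_div_mod_eq[of m W] mod_less_divisor[OF \<open>0 < m\<close>, of W] by linarith
  then have "real W < real m * (real (W div m) + 1)"
    by (metis of_nat_add of_nat_less_iff of_nat_mult of_nat_1 distrib_left mult.right_neutral)
  then have W_div: "real W / real m < real (W div m) + 1"
    using \<open>0 < m\<close> by (simp add: field_simps)
  have "real (m + 2 - 2 * k) * real p < real (m + 2) * real (W + 2)"
    using width by (simp only: of_nat_less_iff flip: of_nat_mult)
  moreover have "real (m + 2 - 2 * k) = real m + 2 - 2 * real k"
    using assms(3) by (simp add: of_nat_diff)
  ultimately have width_real: "(real m + 2 - 2 * real k) * real p < (real m + 2) * (real W + 2)"
    by (simp add: ac_simps)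
  have "window_density m k * real p
      = real k * ((real m + 2 - 2 * real k) * real p) / (real m * (real m + 2))"
    by (simp add: window_density_def)
  also have "\<dots> \<le> real k * ((real m + 2) * (real W + 2)) / (real m * (real m + 2))"
    using width_real by (intro divide_right_mono mult_left_mono) auto
  also have "\<dots> = real k * (real W + 2) * (real m + 2) / (real m * (real m + 2))"
    by (simp add: ac_simps)
  also have "\<dots> = real k * (real W + 2) / real m"
    by (rule nonzero_mult_divide_mult_cancel_right) (simp add: add_nonneg_pos)
  also have "\<dots> = real k * (real W / real m) + 2 * real k / real m"
    by (simp add: add_divide_distrib distrib_left)
  also have "\<dots> \<le> real k * (real (W div m) + 1) + real k"
  proof (rule add_mono)
    show "real k * (real W / real m) \<le> real k * (real (W div m) + 1)"
      using W_div by (intro mult_left_mono) auto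
    have "2 * real k \<le> real m * real k"
      using assms(1) by (intro mult_right_mono) auto
    then show "2 * real k / real m \<le> real k"
      using \<open>0 < m\<close> by (simp add: pos_divide_le_eq mult.commute)
  qed
  also have "\<dots> \<le> real (card (window_set m p k a W)) + 3 * real k"
    using card by (simp add: algebra_simps)
  finally show ?thesis .
qed

lemma card_div_le_dm_mod:
  assumes "msum_free_mod m p A"
  shows "real (card A) / real p \<le> dm_mod m p"
proof -
  have "{real (card A) / real p | A. msum_free_mod m p A}
      \<subseteq> (\<lambda>A. real (card A) / real p) ` Pow {..<p}"
    unfolding msum_free_mod_def by auto
  then have "finite {real (card A) / real p | A. msum_free_mod m p A}"
    by (rule finite_subset) simp
  then show ?thesis
    unfolding dm_mod_def using assms by (intro Max_ge) auto
qed

lemma dm_mod_ge_window_density: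
  assumes "3 \<le> m" and "k + 2 \<le> m" and "2 * k \<le> m + 1" and "m \<le> p"
  shows "window_density m k - 3 * real k / real p \<le> dm_mod m p"
proof -
  obtain a W where lower: "2 * a + 2 * k * p + 2 * W \<le> m * a + 2 * p"
    and upper: "m * a + m * W \<le> 2 * a + m * p"
    and "W \<le> p" and width: "(m + 2 - 2 * k) * p < (m + 2) * (W + 2)"
    using window_parameters_exist[OF assms(1,3,4)] .
  define A where "A = window_set m p k a W"
  have "0 < p" using assms(1,4) by simp
  have free: "msum_free_mod m p A"
    unfolding A_def using msum_free_mod_window_set[OF \<open>0 < p\<close> lower upper]
      window_parameters_fit[OF assms(1,2) upper] by blast
  have "window_density m k * real p \<le> real (card A) + 3 * real k"
    unfolding A_def using assms(1,3) \<open>W \<le> p\<close> width by (intro card_window_set_ge_density) simp_all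
  then have "(window_density m k * real p - 3 * real k) / real p \<le> real (card A) / real p"
    by (intro divide_right_mono) auto
  then have "window_density m k - 3 * real k / real p \<le> real (card A) / real p"
    using \<open>0 < p\<close> by (simp add: diff_divide_distrib)
  also have "\<dots> \<le> dm_mod m p"
    using free by (rule card_div_le_dm_mod)
  finally show ?thesis .
qed

lemma primes_at_top_neq_bot: "primes_at_top \<noteq> bot"
  unfolding primes_at_top_def trivial_limit_def eventually_inf_principal eventually_sequentially
  by (metis bigger_prime less_imp_le mem_Collect_eq)

lemma window_density_le_limit:
  assumes "3 \<le> m" and "k + 2 \<le> m" and "2 * k \<le> m + 1"
    and lim: "((\<lambda>p. dm_mod m p) \<longlongrightarrow> L) primes_at_top"
  shows "window_density m k \<le> L"
proof -
  have le: "primes_at_top \<le> sequentially"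
    unfolding primes_at_top_def by simp
  have "((\<lambda>p. 3 * real k / real p) \<longlongrightarrow> 0) sequentially"
    by (intro tendsto_divide_0[OF tendsto_const] filterlim_at_top_imp_at_infinity
        filterlim_real_sequentially)
  then have bound_lim:
    "((\<lambda>p. window_density m k - 3 * real k / real p) \<longlongrightarrow> window_density m k) sequentially"
    using tendsto_diff[OF tendsto_const] by fastforce
  have "eventually (\<lambda>p. window_density m k - 3 * real k / real p \<le> dm_mod m p) sequentially"
    unfolding eventually_sequentially using dm_mod_ge_window_density[OF assms(1-3)] by blast
  then show ?thesis
    by (rule tendsto_le[OF primes_at_top_neq_bot lim tendsto_mono[OF le bound_lim]
          filter_leD[OF le]])
qed

lemma window_density_one:
  assumes "0 < m"
  shows "window_density m 1 = 1 / (real m + 2)"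
proof -
  have "window_density m 1 = real m / (real m * (real m + 2))"
    by (simp add: window_density_def)
  then show ?thesis using assms by simp
qed

lemma window_density_quarter:
  assumes "2 \<le> m"
  shows "1 / 8 \<le> window_density m ((m + 2) div 4)"
proof -
  define k where "k = (m + 2) div 4"
  define s where "s = (m + 2) mod 4"
  have "1 \<le> k" using assms by (simp add: k_def)
  have s_cases: "s = 0 \<or> s = 1 \<or> s = 2 \<or> s = 3" by (auto simp: s_def)
  have "m + 2 = 4 * k + s"
    unfolding k_def s_def by simp
  then have m: "real m = 4 * real k + real s - 2"
    by (metis add_diff_cancel_right' of_nat_add of_nat_mult of_nat_numeral)
  \<comment> \<open>after substituting \<open>m\<close> this reduces to \<open>s\<^sup>2 - 2 s \<le> 8 k\<close>\<close>
  have "real m * (real m + 2) \<le> 8 * (real k * (real m + 2 - 2 * real k))"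
    using s_cases \<open>1 \<le> k\<close> unfolding m by (auto simp: algebra_simps)
  moreover have "0 < real m * (real m + 2)" using assms by simp
  ultimately show ?thesis
    unfolding window_density_def k_def[symmetric] by (simp add: field_simps)
qed

theorem theorem1p7:
  fixes m :: nat and L :: real
  assumes "m \<ge> 3"
    and "((\<lambda>p. dm_mod m p) \<longlongrightarrow> L) primes_at_top"
  shows "(m \<le> 6 \<longrightarrow> L \<ge> 1 / (real m + 2)) \<and> (m \<ge> 7 \<longrightarrow> L \<ge> 1 / 8)"
proof (intro conjI impI)
  have "window_density m 1 \<le> L"
    by (rule window_density_le_limit[OF assms(1) _ _ assms(2)]) (use assms(1) in simp_all)
  then show "1 / (real m + 2) \<le> L"
    using assms(1) window_density_one by simp
next
  assume "m \<ge> 7"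
  then have "1 / 8 \<le> window_density m ((m + 2) div 4)"
    by (intro window_density_quarter) simp
  also have "\<dots> \<le> L"
    by (rule window_density_le_limit[OF assms(1) _ _ assms(2)]) (use \<open>m \<ge> 7\<close> in simp_all)
  finally show "1 / 8 \<le> L" .
qed

end
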